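(* For every $\alpha<\omega_1$: (1) $\langle A_\alpha,\tau_\alpha\rangle$ is a Baire space; (2) if $\alpha>0$ then $\tau_\alpha$ has no isolated points; (3) every subset of $A_\alpha$ that is Borel in the standard topology of $\mathbf{Tr}$ is Borel with respect to $\tau_\alpha$.
   Context: $\mathbf{Tr}$ is the set of all subtrees of $\omega^{<\omega}$ (subsets closed under initial segments), a closed subspace of $2^{(\omega^{<\omega})}$ with the product topology. $\mathbf{Trw}\subseteq\mathbf{Tr}$ is the set of well-founded trees (no infinite branch). For $T\in\mathbf{Trw}$, $h_T:T\to\omega_1$ is the canonical rank function: $h_T(\nu)=\sup\{h_T(\nu')+1:\nu'\in T \text{ an immediate successor of }\nu\}$ (so terminal nodes get rank 0). For $\alpha<\omega_1$, $A_\alpha=\{T\in\mathbf{Trw}: h_T(\langle\rangle)=\alpha\}$. For $n\in\omega$ let $n^{\le n}$ be the set of sequences of length $\le n$ with values $<n$. $\tau_\alpha$ is the topology on $A_\alpha$ with basis the sets $U(n,T)=\{T'\in A_\alpha: T'\cap n^{\le n}=T\cap n^{\le n} \text{ and } h_{T'}\restriction (T\cap n^{\le n})=h_T\restriction(T\cap n^{\le n})\}$ for $T\in A_\alpha$, $n\in\omega$. *)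

theory Defs
  imports "HOL-Analysis.Analysis"
begin

definition Tr :: "nat list set set" where
  "Tr = {T. \<forall>s t. s @ t \<in> T \<longrightarrow> s \<in> T}"

definition Trw :: "nat list set set" where
  "Trw = {T \<in> Tr. \<not> (\<exists>f :: nat \<Rightarrow> nat. \<forall>n. map f [0..<n] \<in> T)}"

text \<open>omega_1 is represented by the successor cardinal of natLeq (a well-order on a set of
  type nat set); the countable ordinals are the elements of its field, ordered by it.\<close>

definition omega1 :: "nat set rel" where
  "omega1 = cardSuc natLeq"

definition ord_less :: "nat set \<Rightarrow> nat set \<Rightarrow> bool" where
  "ord_less x y \<longleftrightarrow> (x, y) \<in> omega1 \<and> x \<noteq> y"

text \<open>h is a rank function for T: for every node, h(nu) = sup {h(nu')+1 : nu' an immediate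
  successor of nu}, i.e. the least countable ordinal strictly above all h(nu').\<close>
definition is_rank_fun :: "nat list set \<Rightarrow> (nat list \<Rightarrow> nat set) \<Rightarrow> bool" where
  "is_rank_fun T h \<longleftrightarrow>
     (\<forall>\<nu>\<in>T. h \<nu> = wo_rel.minim omega1
         {x \<in> Field omega1. \<forall>k. \<nu> @ [k] \<in> T \<longrightarrow> ord_less (h (\<nu> @ [k])) x})"

definition h :: "nat list set \<Rightarrow> nat list \<Rightarrow> nat set" where
  "h T = (THE g. is_rank_fun T g \<and> (\<forall>\<nu>. \<nu> \<notin> T \<longrightarrow> g \<nu> = undefined))"

definition A :: "nat set \<Rightarrow> nat list set set" where
  "A \<alpha> = {T \<in> Trw. [] \<in> T \<and> h T [] = \<alpha>}"

definition box :: "nat \<Rightarrow> nat list set" where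
  "box n = {s. length s \<le> n \<and> (\<forall>i\<in>set s. i < n)}"

definition U :: "nat set \<Rightarrow> nat \<Rightarrow> nat list set \<Rightarrow> nat list set set" where
  "U \<alpha> n T = {T' \<in> A \<alpha>. T' \<inter> box n = T \<inter> box n \<and>
                   (\<forall>\<nu>\<in>T \<inter> box n. h T' \<nu> = h T \<nu>)}"

definition tau :: "nat set \<Rightarrow> nat list set topology" where
  "tau \<alpha> = topology_generated_by {U \<alpha> n T | n T. T \<in> A \<alpha>}"

text \<open>Tr as a subspace of 2^(omega^(<omega)) with the product of discrete topologies,
  identifying a set with its characteristic function.\<close>
definition Tr_top :: "nat list set topology" where
  "Tr_top = subtopology
     (pullback_topology UNIV (\<lambda>S \<nu>. \<nu> \<in> S)
        (product_topology (\<lambda>_. discrete_topology (UNIV :: bool set)) (UNIV :: nat list set)))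
     Tr"

definition Baire_space :: "'a topology \<Rightarrow> bool" where
  "Baire_space X \<longleftrightarrow>
     (\<forall>\<G>. countable \<G> \<and> (\<forall>G\<in>\<G>. openin X G \<and> X closure_of G = topspace X)
          \<longrightarrow> X closure_of (\<Inter>\<G>) = topspace X)"

definition borel_sets :: "'a topology \<Rightarrow> 'a set set" where
  "borel_sets X = sigma_sets (topspace X) {S. openin X S}"

end

theory Submission
  imports Defs
begin

text \<open>
  (3) Membership of a node \<nu> is constant on every basic set U \<alpha> n T with \<nu> in box n, so the
  inclusion of A \<alpha> into Tr is continuous from tau \<alpha> to the product topology, and Borel sets
  pull back to Borel sets.

  (2) For \<alpha> > 0, a tree T in A \<alpha> can be modified at the root children N and N+1, which lie
  outside box N, without changing any rank inside box N: swap the two subtrees if they differ;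
  otherwise add the leaf [N] if it is missing, or prune the subtree at [N], whose rank is
  duplicated at [N+1]. Hence no U \<alpha> N T is a singleton.

  (1) Given dense open sets G i, a fusion sequence (T i, n i) with
  U \<alpha> (n (i+1)) (T (i+1)) \<subseteq> U \<alpha> (n i) (T i) \<inter> G i has as limit the tree
  \<Union>i. T i \<inter> box (n i), which lies in every U \<alpha> (n i) (T i) provided ranks do not drop in the
  limit. Since every rank is a countable ordinal, this is ensured by letting each stage realise,
  below the nodes in the current box, the first n i ordinals of a fixed enumeration of the
  ordinals below their ranks.
\<close>

section \<open>Countable ordinals\<close>

context includes cardinal_syntax
begin

lemma Card_order_omega1: "Card_order omega1"
  unfolding omega1_def by (rule cardSuc_Card_order[OF natLeq_Card_order])

lemma wo_rel_omega1: "wo_rel omega1"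
  using Card_order_omega1 unfolding wo_rel_def card_order_on_def by blast

lemma ord_less_iff_underS: "ord_less x y \<longleftrightarrow> x \<in> underS omega1 y"
  unfolding ord_less_def underS_def by blast

lemma wf_ord_less: "wf {(x, y). ord_less x y}"
proof -
  have "wf (omega1 - Id)"
    using wo_rel_omega1 unfolding wo_rel_def well_order_on_def by blast
  moreover have "{(x, y). ord_less x y} = omega1 - Id"
    unfolding ord_less_def by auto
  ultimately show ?thesis by simp
qed

lemma countable_underS_omega1: "countable (underS omega1 a)"
proof (cases "a \<in> Field omega1")
  case True
  have "|underS omega1 a| <o omega1"
    using card_of_underS[OF Card_order_omega1 True] .
  then have "|underS omega1 a| \<le>o |UNIV :: nat set|"
    using cardSuc_ordLeq_ordLess[OF natLeq_Card_order card_of_Card_order] card_of_nat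
      ordLeq_ordIso_trans ordIso_symmetric unfolding omega1_def by blast
  then show ?thesis
    unfolding countable_def card_of_ordLeq[symmetric] by blast
next
  case False
  then have "underS omega1 a = {}"
    unfolding underS_def by (blast intro: FieldI2)
  then show ?thesis by simp
qed

lemma uncountable_Field_omega1: "uncountable (Field omega1)"
proof
  assume "countable (Field omega1)"
  then have "|Field omega1| \<le>o |UNIV :: nat set|"
    unfolding countable_def card_of_ordLeq[symmetric] by blast
  then have "omega1 \<le>o natLeq"
    using card_of_Field_ordIso[OF Card_order_omega1] card_of_nat
    by (meson ordIso_ordLeq_trans ordIso_symmetric ordLeq_ordIso_trans)
  then show False
    using cardSuc_greater[OF natLeq_Card_order] not_ordLess_ordLeq unfolding omega1_def by blast
qed

end

lemma ord_less_Field: "ord_less a b \<Longrightarrow> a \<in> Field omega1 \<and> b \<in> Field omega1"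
  unfolding ord_less_def by (blast intro: FieldI1 FieldI2)

lemma ord_le_or_less:
  "a \<in> Field omega1 \<Longrightarrow> b \<in> Field omega1 \<Longrightarrow> (a, b) \<in> omega1 \<or> ord_less b a"
  using wo_rel.TOTALS[OF wo_rel_omega1] wo_rel.REFL[OF wo_rel_omega1]
  unfolding ord_less_def refl_on_def by blast

lemma ord_le_imp_not_less: "(a, b) \<in> omega1 \<Longrightarrow> \<not> ord_less b a"
  using wo_rel.ANTISYM[OF wo_rel_omega1] unfolding ord_less_def antisym_def by blast

lemma ord_le_refl: "a \<in> Field omega1 \<Longrightarrow> (a, a) \<in> omega1"
  using wo_rel.REFL[OF wo_rel_omega1] unfolding refl_on_def by blast

lemma ord_le_less_trans: "(a, b) \<in> omega1 \<Longrightarrow> ord_less b c \<Longrightarrow> ord_less a c"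
  using wo_rel.TRANS[OF wo_rel_omega1] ord_le_imp_not_less
  unfolding ord_less_def trans_def by blast

lemma countable_has_strict_ub:
  assumes "countable S" "S \<subseteq> Field omega1"
  shows "\<exists>x\<in>Field omega1. \<forall>s\<in>S. ord_less s x"
proof -
  have "countable (S \<union> (\<Union>s\<in>S. underS omega1 s))"
    using assms(1) countable_underS_omega1 by blast
  then obtain x where x: "x \<in> Field omega1" "x \<notin> S \<union> (\<Union>s\<in>S. underS omega1 s)"
    using uncountable_Field_omega1 by (metis countable_subset subsetI)
  have "ord_less s x" if "s \<in> S" for s
  proof -
    have "(x, s) \<notin> omega1"
      using x(2) that unfolding underS_def by blast
    then show ?thesis
      using ord_le_or_less[of x s] x(1) that assms(2) by blast
  qed
  with x(1) show ?thesis by blast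
qed

abbreviation zero1 :: "nat set" where
  "zero1 \<equiv> wo_rel.minim omega1 (Field omega1)"

lemma zero1_in_Field: "zero1 \<in> Field omega1"
  using wo_rel.minim_in[OF wo_rel_omega1, of "Field omega1"] uncountable_Field_omega1 by fastforce

lemma zero1_least: "b \<in> Field omega1 \<Longrightarrow> (zero1, b) \<in> omega1"
  using wo_rel.minim_least[OF wo_rel_omega1] by blast

section \<open>Canonical ranks of well-founded trees\<close>

lemma Tr_prefix: "T \<in> Tr \<Longrightarrow> s @ t \<in> T \<Longrightarrow> s \<in> T"
  unfolding Tr_def by blast

lemma Trw_imp_Tr: "T \<in> Trw \<Longrightarrow> T \<in> Tr"
  unfolding Trw_def by blast

definition child_rel :: "nat list set \<Rightarrow> nat list rel" where
  "child_rel T = {(\<nu> @ [k], \<nu>) | \<nu> k. \<nu> @ [k] \<in> T}"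

lemma wf_child_rel:
  assumes T: "T \<in> Trw"
  shows "wf (child_rel T)"
proof (rule ccontr)
  assume "\<not> wf (child_rel T)"
  then obtain f where "\<And>i. (f (Suc i), f i) \<in> child_rel T"
    unfolding wf_iff_no_infinite_down_chain by blast
  then obtain k where f: "\<And>i. f (Suc i) = f i @ [k i]" "\<And>i. f (Suc i) \<in> T"
    unfolding child_rel_def by simp metis
  have extends: "\<exists>t. f j = f i @ t" if "i \<le> j" for i j
    using that by (induction j rule: dec_induct) (auto simp: f(1))
  have length_ge: "i < length (f (Suc i))" for i
    by (induction i) (auto simp: f(1))
  define b where "b m = f (Suc m) ! m" for m
  have "map b [0..<n] = take n (f (Suc n))" for n
  proof (rule nth_equalityI)
    show "length (map b [0..<n]) = length (take n (f (Suc n)))"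
      using length_ge[of n] by simp
  next
    fix m assume "m < length (map b [0..<n])"
    then have "m < n" by simp
    then obtain t where "f (Suc n) = f (Suc m) @ t"
      using extends[of "Suc m" "Suc n"] by auto
    then show "map b [0..<n] ! m = take n (f (Suc n)) ! m"
      using \<open>m < n\<close> length_ge[of m] by (simp add: b_def nth_append)
  qed
  moreover have "take n (f (Suc n)) \<in> T" for n
    using Tr_prefix[OF Trw_imp_Tr[OF T], of "take n (f (Suc n))" "drop n (f (Suc n))"] f(2)[of n]
    by simp
  ultimately have "\<forall>n. map b [0..<n] \<in> T"
    by simp
  then show False
    using T unfolding Trw_def by blast
qed

definition rank_step :: "nat list set \<Rightarrow> (nat list \<Rightarrow> nat set) \<Rightarrow> nat list \<Rightarrow> nat set" where
  "rank_step T g \<nu> =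
     wo_rel.minim omega1 {x \<in> Field omega1. \<forall>k. \<nu> @ [k] \<in> T \<longrightarrow> ord_less (g (\<nu> @ [k])) x}"

lemma is_rank_fun_iff: "is_rank_fun T g \<longleftrightarrow> (\<forall>\<nu>\<in>T. g \<nu> = rank_step T g \<nu>)"
  unfolding is_rank_fun_def rank_step_def by simp

lemma rank_step_cong:
  "(\<And>k. \<nu> @ [k] \<in> T \<Longrightarrow> g (\<nu> @ [k]) = g' (\<nu> @ [k])) \<Longrightarrow> rank_step T g \<nu> = rank_step T g' \<nu>"
  unfolding rank_step_def by (rule arg_cong[where f = "wo_rel.minim omega1"]) auto

lemma is_rank_fun_unique:
  assumes T: "T \<in> Trw" and g: "is_rank_fun T g" and g': "is_rank_fun T g'"
  shows "\<nu> \<in> T \<Longrightarrow> g \<nu> = g' \<nu>"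
proof (induction \<nu> rule: wf_induct_rule[OF wf_child_rel[OF T]])
  case (1 \<nu>)
  have "g \<nu> = rank_step T g \<nu>"
    using g 1(2) unfolding is_rank_fun_iff by blast
  also have "\<dots> = rank_step T g' \<nu>"
    using 1 by (intro rank_step_cong) (auto simp: child_rel_def)
  also have "\<dots> = g' \<nu>"
    using g' 1(2) unfolding is_rank_fun_iff by simp
  finally show ?case .
qed

lemma is_rank_fun_exists:
  assumes T: "T \<in> Trw"
  shows "\<exists>g. is_rank_fun T g"
proof
  define g where "g = wfrec (child_rel T) (rank_step T)"
  have "g \<nu> = rank_step T g \<nu>" for \<nu>
  proof -
    have "g \<nu> = rank_step T (cut g (child_rel T) \<nu>) \<nu>"
      unfolding g_def by (rule wfrec[OF wf_child_rel[OF T]])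
    also have "\<dots> = rank_step T g \<nu>"
      by (rule rank_step_cong) (simp add: cut_apply child_rel_def)
    finally show ?thesis .
  qed
  then show "is_rank_fun T g"
    unfolding is_rank_fun_iff by blast
qed

lemma h_eq_rank_fun:
  assumes T: "T \<in> Trw" and g: "is_rank_fun T g"
  shows "is_rank_fun T (h T)" and "\<nu> \<in> T \<Longrightarrow> h T \<nu> = g \<nu>"
proof -
  define g' where "g' \<nu> = (if \<nu> \<in> T then g \<nu> else undefined)" for \<nu>
  have g': "is_rank_fun T g'"
    unfolding is_rank_fun_iff
  proof
    fix \<nu> assume "\<nu> \<in> T"
    have "rank_step T g' \<nu> = rank_step T g \<nu>"
      by (rule rank_step_cong) (simp add: g'_def)
    then show "g' \<nu> = rank_step T g' \<nu>"
      using g \<open>\<nu> \<in> T\<close> unfolding is_rank_fun_iff g'_def by simp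
  qed
  have "h T = g'"
    unfolding h_def
  proof (rule the_equality)
    fix f assume f: "is_rank_fun T f \<and> (\<forall>\<nu>. \<nu> \<notin> T \<longrightarrow> f \<nu> = undefined)"
    show "f = g'"
    proof
      fix \<nu>
      show "f \<nu> = g' \<nu>"
        using f is_rank_fun_unique[OF T _ g, of f \<nu>] by (cases "\<nu> \<in> T") (auto simp: g'_def)
    qed
  qed (use g' in \<open>simp add: g'_def\<close>)
  then show "is_rank_fun T (h T)" and "\<nu> \<in> T \<Longrightarrow> h T \<nu> = g \<nu>"
    using g' by (simp_all add: g'_def)
qed

lemma is_rank_fun_h: "T \<in> Trw \<Longrightarrow> is_rank_fun T (h T)"
  using h_eq_rank_fun(1) is_rank_fun_exists by blast

definition is_rank_at :: "nat list set \<Rightarrow> (nat list \<Rightarrow> nat set) \<Rightarrow> nat list \<Rightarrow> bool" where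
  "is_rank_at T g \<nu> \<longleftrightarrow> g \<nu> \<in> Field omega1
     \<and> (\<forall>k. \<nu> @ [k] \<in> T \<longrightarrow> ord_less (g (\<nu> @ [k])) (g \<nu>))
     \<and> (\<forall>x\<in>Field omega1. (\<forall>k. \<nu> @ [k] \<in> T \<longrightarrow> ord_less (g (\<nu> @ [k])) x) \<longrightarrow> (g \<nu>, x) \<in> omega1)"

lemma rank_step_eqI: "is_rank_at T g \<nu> \<Longrightarrow> rank_step T g \<nu> = g \<nu>"
  unfolding is_rank_at_def rank_step_def
  by (rule wo_rel.equals_minim[OF wo_rel_omega1, symmetric]) auto

lemma is_rank_at_h:
  assumes T: "T \<in> Trw"
  shows "\<nu> \<in> T \<Longrightarrow> is_rank_at T (h T) \<nu>"
proof (induction \<nu> rule: wf_induct_rule[OF wf_child_rel[OF T]])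
  case (1 \<nu>)
  define S where "S = {x \<in> Field omega1. \<forall>k. \<nu> @ [k] \<in> T \<longrightarrow> ord_less (h T (\<nu> @ [k])) x}"
  have "(\<lambda>k. h T (\<nu> @ [k])) ` {k. \<nu> @ [k] \<in> T} \<subseteq> Field omega1"
    using 1 unfolding child_rel_def is_rank_at_def by auto
  then have "S \<noteq> {}"
    using countable_has_strict_ub[of "(\<lambda>k. h T (\<nu> @ [k])) ` {k. \<nu> @ [k] \<in> T}"]
    unfolding S_def by auto
  moreover have "S \<subseteq> Field omega1"
    unfolding S_def by blast
  moreover have "h T \<nu> = wo_rel.minim omega1 S"
    using is_rank_fun_h[OF T] 1(2) unfolding is_rank_fun_def S_def by blast
  ultimately have "h T \<nu> \<in> S" and "\<forall>x\<in>S. (h T \<nu>, x) \<in> omega1"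
    using wo_rel.minim_in[OF wo_rel_omega1] wo_rel.minim_least[OF wo_rel_omega1] by auto
  then show ?case
    unfolding is_rank_at_def S_def by blast
qed

lemma is_rank_at_cong:
  assumes "\<And>k. \<nu> @ [k] \<in> T \<longleftrightarrow> \<nu> @ [k] \<in> T'" and "g \<nu> = g' \<nu>"
    and "\<And>k. \<nu> @ [k] \<in> T \<Longrightarrow> g (\<nu> @ [k]) = g' (\<nu> @ [k])"
  shows "is_rank_at T g \<nu> \<longleftrightarrow> is_rank_at T' g' \<nu>"
  using assms unfolding is_rank_at_def by simp

lemma exists_child_rank_ge:
  assumes T: "T \<in> Trw" and "\<nu> \<in> T" and \<beta>: "ord_less \<beta> (h T \<nu>)"
  shows "\<exists>k. \<nu> @ [k] \<in> T \<and> (\<beta>, h T (\<nu> @ [k])) \<in> omega1"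
proof (rule ccontr)
  assume none: "\<not> ?thesis"
  have rank: "is_rank_at T (h T) \<nu>"
    using is_rank_at_h[OF T \<open>\<nu> \<in> T\<close>] .
  have "ord_less (h T (\<nu> @ [k])) \<beta>" if "\<nu> @ [k] \<in> T" for k
    using none that ord_le_or_less[of \<beta> "h T (\<nu> @ [k])"] ord_less_Field[OF \<beta>]
      is_rank_at_h[OF T that] unfolding is_rank_at_def by blast
  then have "(h T \<nu>, \<beta>) \<in> omega1"
    using rank ord_less_Field[OF \<beta>] unfolding is_rank_at_def by blast
  then show False
    using ord_le_imp_not_less \<beta> by blast
qed

lemma Trw_if_strict_rank:
  assumes "T \<in> Tr" and "\<And>\<nu> k. \<nu> @ [k] \<in> T \<Longrightarrow> ord_less (g (\<nu> @ [k])) (g \<nu>)"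
  shows "T \<in> Trw"
proof -
  have "\<not> (\<forall>n. map b [0..<n] \<in> T)" for b :: "nat \<Rightarrow> nat"
  proof
    assume b: "\<forall>n. map b [0..<n] \<in> T"
    have "(g (map b [0..<Suc n]), g (map b [0..<n])) \<in> {(x, y). ord_less x y}" for n
      using assms(2)[of "map b [0..<n]" "b n"] b[rule_format, of "Suc n"] by simp
    then have "\<exists>f. \<forall>n. (f (Suc n), f n) \<in> {(x, y). ord_less x y}"
      by (intro exI[of _ "\<lambda>n. g (map b [0..<n])"]) blast
    then show False
      using wf_ord_less unfolding wf_iff_no_infinite_down_chain by blast
  qed
  then show ?thesis
    using assms(1) unfolding Trw_def by blast
qed

lemma h_eqI:
  assumes T: "T \<in> Tr" and g: "\<And>\<nu>. \<nu> \<in> T \<Longrightarrow> is_rank_at T g \<nu>"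
  shows "T \<in> Trw" and "\<nu> \<in> T \<Longrightarrow> h T \<nu> = g \<nu>"
proof -
  show Trw: "T \<in> Trw"
    using Trw_if_strict_rank[OF T] g Tr_prefix[OF T] unfolding is_rank_at_def by blast
  have "is_rank_fun T g"
    using g rank_step_eqI unfolding is_rank_fun_iff by metis
  then show "\<nu> \<in> T \<Longrightarrow> h T \<nu> = g \<nu>"
    by (rule h_eq_rank_fun(2)[OF Trw])
qed

section \<open>The topology tau\<close>

lemma box_mono: "n \<le> m \<Longrightarrow> box n \<subseteq> box m"
  unfolding box_def by auto

lemma finite_box: "finite (box n)"
proof -
  have "box n \<subseteq> {xs. set xs \<subseteq> {..<n} \<and> length xs \<le> n}"
    unfolding box_def by auto
  then show ?thesis
    using finite_lists_length_le[of "{..<n}" n] finite_subset by blast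
qed

lemma eventually_in_box: "\<forall>\<^sub>F n in sequentially. s \<in> box n"
proof -
  have "s \<in> box n" if "length s + sum_list s < n" for n
    using that member_le_sum_list[of _ s] unfolding box_def by fastforce
  then show ?thesis
    unfolding eventually_sequentially by (metis Suc_le_eq)
qed

lemma U_antimono: "n \<le> m \<Longrightarrow> U \<alpha> m T \<subseteq> U \<alpha> n T"
  unfolding U_def using box_mono by blast

lemma U_self: "T \<in> A \<alpha> \<Longrightarrow> T \<in> U \<alpha> n T"
  unfolding U_def by blast

lemma U_subset_A: "U \<alpha> n T \<subseteq> A \<alpha>"
  unfolding U_def by blast

lemma U_recenter: "T \<in> U \<alpha> n T0 \<Longrightarrow> U \<alpha> n T = U \<alpha> n T0"
  unfolding U_def by auto

lemma topspace_tau: "topspace (tau \<alpha>) = A \<alpha>"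
  unfolding tau_def topology_generated_by_topspace using U_self U_subset_A by blast

lemma openin_tau_U: "T \<in> A \<alpha> \<Longrightarrow> openin (tau \<alpha>) (U \<alpha> n T)"
  unfolding tau_def openin_topology_generated_by_iff
  by (rule generate_topology_on.Basis) blast

lemma openin_tau_iff:
  "openin (tau \<alpha>) W \<longleftrightarrow> W \<subseteq> A \<alpha> \<and> (\<forall>T\<in>W. \<exists>n. U \<alpha> n T \<subseteq> W)"
proof
  assume "openin (tau \<alpha>) W"
  then have "generate_topology_on {U \<alpha> n T | n T. T \<in> A \<alpha>} W"
    unfolding tau_def openin_topology_generated_by_iff .
  then have "\<forall>T\<in>W. \<exists>n. U \<alpha> n T \<subseteq> W"
  proof induction
    case (Int V W)
    show ?case
    proof
      fix T assume "T \<in> V \<inter> W"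
      then obtain n m where "U \<alpha> n T \<subseteq> V" "U \<alpha> m T \<subseteq> W"
        using Int.IH by blast
      then have "U \<alpha> (max n m) T \<subseteq> V \<inter> W"
        using U_antimono[of n "max n m" \<alpha> T] U_antimono[of m "max n m" \<alpha> T] by auto
      then show "\<exists>k. U \<alpha> k T \<subseteq> V \<inter> W" ..
    qed
  next
    case (Basis W)
    then show ?case
      using U_recenter by blast
  qed blast+
  moreover have "W \<subseteq> A \<alpha>"
    using \<open>openin (tau \<alpha>) W\<close> openin_subset topspace_tau by metis
  ultimately show "W \<subseteq> A \<alpha> \<and> (\<forall>T\<in>W. \<exists>n. U \<alpha> n T \<subseteq> W)" by blast
next
  assume W: "W \<subseteq> A \<alpha> \<and> (\<forall>T\<in>W. \<exists>n. U \<alpha> n T \<subseteq> W)"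
  then obtain N where N: "\<forall>T\<in>W. U \<alpha> (N T) T \<subseteq> W"
    by metis
  then have "W = (\<Union>T\<in>W. U \<alpha> (N T) T)"
    using W U_self by blast
  moreover have "openin (tau \<alpha>) (\<Union>T\<in>W. U \<alpha> (N T) T)"
    using openin_tau_U W by blast
  ultimately show "openin (tau \<alpha>) W"
    by simp
qed

lemma A_subset_Tr: "A \<alpha> \<subseteq> Tr"
  unfolding A_def Trw_def by blast

lemma in_U_if_agrees:
  assumes "T \<in> A \<alpha>" "T' \<in> Trw" "T' \<inter> box N = T \<inter> box N"
    and "\<And>\<nu>. \<nu> \<in> T \<inter> box N \<Longrightarrow> h T' \<nu> = h T \<nu>"
  shows "T' \<in> U \<alpha> N T"
proof -
  have "[] \<in> T \<inter> box N"
    using assms(1) unfolding A_def box_def by simp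
  then have "[] \<in> T'" and "h T' [] = \<alpha>"
    using assms unfolding A_def by auto
  then show ?thesis
    using assms unfolding U_def A_def by blast
qed

section \<open>Borel sets\<close>

lemma continuous_map_tau_member: "continuous_map (tau \<alpha>) (discrete_topology UNIV) (\<lambda>T. \<nu> \<in> T)"
  unfolding continuous_map_def topspace_tau
proof (intro conjI allI impI)
  fix P :: "bool set"
  obtain n where n: "\<nu> \<in> box n"
    using eventually_in_box[of \<nu>] unfolding eventually_sequentially by auto
  have same: "(\<nu> \<in> T') = (\<nu> \<in> T)" if "T' \<in> U \<alpha> n T" for T T'
    using that n unfolding U_def by blast
  have "U \<alpha> n T \<subseteq> {T' \<in> A \<alpha>. (\<nu> \<in> T') \<in> P}" if "(\<nu> \<in> T) \<in> P" for T
    using that U_subset_A[of \<alpha> n T] by (auto simp: same)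
  then show "openin (tau \<alpha>) {T \<in> A \<alpha>. (\<nu> \<in> T) \<in> P}"
    unfolding openin_tau_iff by auto
qed simp

lemma continuous_map_tau_Tr_top: "continuous_map (tau \<alpha>) Tr_top (\<lambda>T. T)"
  unfolding Tr_top_def
proof (rule continuous_map_into_subtopology)
  show "continuous_map (tau \<alpha>)
    (pullback_topology UNIV (\<lambda>S \<nu>. \<nu> \<in> S) (product_topology (\<lambda>_. discrete_topology UNIV) UNIV))
    (\<lambda>T. T)"
    by (rule continuous_map_pullback')
      (simp_all add: o_def continuous_map_componentwise_UNIV continuous_map_tau_member)
  show "(\<lambda>T. T) \<in> topspace (tau \<alpha>) \<rightarrow> Tr"
    using A_subset_Tr topspace_tau by blast
qed

lemma borel_sets_preimage:
  assumes f: "continuous_map X Y f" and B: "B \<in> borel_sets Y"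
  shows "{x \<in> topspace X. f x \<in> B} \<in> borel_sets X"
proof -
  have "f \<in> topspace X \<rightarrow> topspace Y"
    using f by (rule continuous_map_funspace)
  then have "f -` B \<inter> topspace X
      \<in> sigma_sets (topspace X) {f -` V \<inter> topspace X | V. V \<in> {V. openin Y V}}"
    using sigma_sets_vimage_commute[of f "topspace X" "topspace Y" "{V. openin Y V}"] B
    unfolding borel_sets_def by blast
  also have "\<dots> \<subseteq> sigma_sets (topspace X) {S. openin X S}"
  proof (rule sigma_sets_mono')
    show "{f -` V \<inter> topspace X | V. V \<in> {V. openin Y V}} \<subseteq> {S. openin X S}"
      using f unfolding continuous_map_openin_preimage_eq by (auto simp only: Int_commute)
  qed
  finally show ?thesis
    unfolding borel_sets_def by (simp add: vimage_def Int_def conj_commute)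
qed

lemma borel_sets_tau:
  assumes "B \<subseteq> A \<alpha>" "B \<in> borel_sets Tr_top"
  shows "B \<in> borel_sets (tau \<alpha>)"
proof -
  have "{T \<in> topspace (tau \<alpha>). T \<in> B} = B"
    using assms(1) topspace_tau by blast
  then show ?thesis
    using borel_sets_preimage[OF continuous_map_tau_Tr_top[of \<alpha>] assms(2)] by simp
qed

section \<open>Isolated points\<close>

definition map_head :: "(nat \<Rightarrow> nat) \<Rightarrow> nat list \<Rightarrow> nat list" where
  "map_head p s = (case s of [] \<Rightarrow> [] | k # r \<Rightarrow> p k # r)"

lemma map_head_Nil [simp]: "map_head p [] = []"
  and map_head_singleton [simp]: "map_head p [k] = [p k]"
  and map_head_append: "s \<noteq> [] \<Longrightarrow> map_head p (s @ t) = map_head p s @ t"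
  unfolding map_head_def by (auto split: list.split)

lemma map_head_Tr: "T \<in> Tr \<Longrightarrow> map_head p -` T \<in> Tr"
  unfolding Tr_def
  by (auto simp: map_head_append) (metis append_self_conv2 map_head_Nil map_head_append)

lemma map_head_rank:
  assumes T: "T \<in> Trw" and p: "surj p"
  shows "map_head p -` T \<in> Trw"
    and "\<nu> \<in> map_head p -` T \<Longrightarrow> h (map_head p -` T) \<nu> = h T (map_head p \<nu>)"
proof -
  have "is_rank_at (map_head p -` T) (\<lambda>s. h T (map_head p s)) \<nu>" if "\<nu> \<in> map_head p -` T" for \<nu>
  proof (cases "\<nu> = []")
    case True
    have children: "(\<forall>k. [p k] \<in> T \<longrightarrow> ord_less (h T [p k]) x) \<longleftrightarrow>
        (\<forall>k. [k] \<in> T \<longrightarrow> ord_less (h T [k]) x)" for x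
      using p by (metis surjD)
    show ?thesis
      using is_rank_at_h[OF T, of "[]"] that True unfolding is_rank_at_def by (simp add: children)
  next
    case False
    then show ?thesis
      using is_rank_at_h[OF T, of "map_head p \<nu>"] that unfolding is_rank_at_def
      by (simp add: map_head_append)
  qed
  then show "map_head p -` T \<in> Trw"
    and "\<nu> \<in> map_head p -` T \<Longrightarrow> h (map_head p -` T) \<nu> = h T (map_head p \<nu>)"
    using h_eqI[OF map_head_Tr[OF Trw_imp_Tr[OF T]]] by blast+
qed

lemma insert_leaf_Tr: "T \<in> Tr \<Longrightarrow> [] \<in> T \<Longrightarrow> insert [n] T \<in> Tr"
  unfolding Tr_def by (auto simp: append_eq_Cons_conv)

lemma insert_leaf_rank:
  assumes T: "T \<in> Trw" "[] \<in> T" "[n] \<notin> T" and pos: "ord_less zero1 (h T [])"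
  shows "insert [n] T \<in> Trw" and "\<nu> \<in> T \<Longrightarrow> h (insert [n] T) \<nu> = h T \<nu>"
proof -
  define g where "g = (h T)([n] := zero1)"
  have leaf: "\<nu> @ [k] \<notin> T" if "\<nu> = [n]" for \<nu> k
    using Tr_prefix[OF Trw_imp_Tr[OF T(1)], of "[n]" "[k]"] T(3) that by auto
  have "is_rank_at (insert [n] T) g \<nu>" if \<nu>: "\<nu> \<in> insert [n] T" for \<nu>
  proof -
    consider "\<nu> = [n]" | "\<nu> = []" | "\<nu> \<in> T" "\<nu> \<noteq> []" "\<nu> \<noteq> [n]"
      using \<nu> by blast
    then show ?thesis
    proof cases
      case 1
      then show ?thesis
        using leaf zero1_in_Field zero1_least unfolding is_rank_at_def g_def by simp
    next
      case 2
      have "g [k] = h T [k]" if "[k] \<in> T" for k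
        using that T(3) by (auto simp: g_def)
      then show ?thesis
        using is_rank_at_h[OF T(1) T(2)] pos 2 T(3) unfolding is_rank_at_def
        by (auto simp: g_def)
    next
      case 3
      then have "is_rank_at T g \<nu> \<longleftrightarrow> is_rank_at (insert [n] T) g \<nu>"
        by (intro is_rank_at_cong) (auto simp: append_eq_Cons_conv)
      moreover have "is_rank_at T (h T) \<nu> \<longleftrightarrow> is_rank_at T g \<nu>"
        using 3 by (intro is_rank_at_cong) (auto simp: g_def append_eq_Cons_conv)
      ultimately show ?thesis
        using is_rank_at_h[OF T(1) 3(1)] by blast
    qed
  qed
  note rank = h_eqI[OF insert_leaf_Tr[OF Trw_imp_Tr[OF T(1)] T(2)] this]
  show "insert [n] T \<in> Trw"
    by (rule rank(1))
  show "h (insert [n] T) \<nu> = h T \<nu>" if "\<nu> \<in> T"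
    using rank(2)[of \<nu>] that T(3) by (auto simp: g_def)
qed

definition prune :: "nat \<Rightarrow> nat list set \<Rightarrow> nat list set" where
  "prune n T = {s \<in> T. \<forall>r. s \<noteq> n # r}"

lemma prune_Tr: "T \<in> Tr \<Longrightarrow> prune n T \<in> Tr"
  unfolding Tr_def prune_def by (auto simp: Cons_eq_append_conv)

lemma prune_rank:
  assumes T: "T \<in> Trw" and m: "[m] \<in> T" "m \<noteq> n" "(h T [n], h T [m]) \<in> omega1"
  shows "prune n T \<in> Trw" and "\<nu> \<in> prune n T \<Longrightarrow> h (prune n T) \<nu> = h T \<nu>"
proof -
  have "is_rank_at (prune n T) (h T) \<nu>" if \<nu>: "\<nu> \<in> prune n T" for \<nu>
  proof (cases "\<nu> = []")
    case True
    have root: "is_rank_at T (h T) []"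
      using is_rank_at_h[OF T] \<nu> True unfolding prune_def by blast
    have "ord_less (h T [k]) x"
      if "\<forall>k. [k] \<in> T \<and> k \<noteq> n \<longrightarrow> ord_less (h T [k]) x" "[k] \<in> T" for k x
    proof (cases "k = n")
      case True
      then show ?thesis
        using that(1) m ord_le_less_trans[OF m(3)] by blast
    qed (use that in blast)
    then show ?thesis
      using root True unfolding is_rank_at_def prune_def by simp
  next
    case False
    then have "is_rank_at T (h T) \<nu> \<longleftrightarrow> is_rank_at (prune n T) (h T) \<nu>"
      using \<nu> by (intro is_rank_at_cong) (auto simp: prune_def neq_Nil_conv)
    then show ?thesis
      using is_rank_at_h[OF T] \<nu> unfolding prune_def by blast
  qed
  then show "prune n T \<in> Trw" and "\<nu> \<in> prune n T \<Longrightarrow> h (prune n T) \<nu> = h T \<nu>"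
    using h_eqI[OF prune_Tr[OF Trw_imp_Tr[OF T]]] by blast+
qed

lemma exists_other_tree_in_U:
  assumes pos: "ord_less zero1 \<alpha>" and T: "T \<in> A \<alpha>"
  shows "\<exists>T'\<in>U \<alpha> N T. T' \<noteq> T"
proof -
  have TW: "T \<in> Trw" and root: "[] \<in> T" "h T [] = \<alpha>"
    using T unfolding A_def by auto
  define p where "p = Transposition.transpose N (Suc N)"
  have "surj p"
    unfolding p_def by (rule surj_transpose)
  have p_box: "map_head p s = s" if "s \<in> box N" for s
    using that unfolding box_def map_head_def p_def by (auto split: list.split)
  have N_notin_box: "N # r \<notin> box N" for r
    unfolding box_def by simp
  consider "map_head p -` T \<noteq> T" | "map_head p -` T = T" "[N] \<notin> T" | "map_head p -` T = T" "[N] \<in> T"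
    by blast
  then show ?thesis
  proof cases
    case 1
    note moved = map_head_rank[OF TW \<open>surj p\<close>]
    have box: "map_head p -` T \<inter> box N = T \<inter> box N"
      using p_box by auto
    have "map_head p -` T \<in> U \<alpha> N T"
    proof (rule in_U_if_agrees[OF T moved(1) box])
      fix \<nu> assume "\<nu> \<in> T \<inter> box N"
      then show "h (map_head p -` T) \<nu> = h T \<nu>"
        using moved(2)[of \<nu>] p_box[of \<nu>] by simp
    qed
    with 1 show ?thesis by blast
  next
    case 2
    note grown = insert_leaf_rank[OF TW root(1) 2(2)]
    have box: "insert [N] T \<inter> box N = T \<inter> box N"
      using N_notin_box[of "[]"] by blast
    have "insert [N] T \<in> U \<alpha> N T"
      using grown(2) pos root(2) by (intro in_U_if_agrees[OF T grown(1) box]) auto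
    with 2 show ?thesis by blast
  next
    case 3
    have "[Suc N] \<in> T"
      using 3 by (auto simp: p_def)
    have "h T [N] = h T [Suc N]"
      using map_head_rank(2)[OF TW \<open>surj p\<close>, of "[N]"] 3 \<open>[Suc N] \<in> T\<close> by (simp add: p_def)
    moreover have "h T [Suc N] \<in> Field omega1"
      using is_rank_at_h[OF TW \<open>[Suc N] \<in> T\<close>] unfolding is_rank_at_def by blast
    ultimately have "(h T [N], h T [Suc N]) \<in> omega1"
      using ord_le_refl by simp
    note pruned = prune_rank[OF TW \<open>[Suc N] \<in> T\<close> n_not_Suc_n[symmetric] this]
    have box: "prune N T \<inter> box N = T \<inter> box N"
      using N_notin_box unfolding prune_def by blast
    have "prune N T \<in> U \<alpha> N T"
      using pruned(2) box by (intro in_U_if_agrees[OF T pruned(1) box]) blast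
    moreover have "prune N T \<noteq> T"
      using 3(2) unfolding prune_def by blast
    ultimately show ?thesis by blast
  qed
qed

lemma tau_no_isolated_points:
  assumes "ord_less zero1 \<alpha>" "T \<in> topspace (tau \<alpha>)"
  shows "\<not> openin (tau \<alpha>) {T}"
proof
  assume "openin (tau \<alpha>) {T}"
  then obtain n where "U \<alpha> n T \<subseteq> {T}"
    unfolding openin_tau_iff by blast
  moreover obtain T' where "T' \<in> U \<alpha> n T" "T' \<noteq> T"
    using exists_other_tree_in_U[OF assms(1)] assms(2) unfolding topspace_tau by blast
  ultimately show False
    by blast
qed

section \<open>The Baire property\<close>

definition ranks_witnessed :: "nat list set \<Rightarrow> nat \<Rightarrow> nat list set \<Rightarrow> nat \<Rightarrow> bool" where
  "ranks_witnessed T n T' n' \<longleftrightarrow>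
     (\<forall>\<nu>\<in>T \<inter> box n. \<forall>j\<le>n. underS omega1 (h T \<nu>) \<noteq> {} \<longrightarrow>
        (\<exists>k. \<nu> @ [k] \<in> T' \<inter> box n' \<and>
             (from_nat_into (underS omega1 (h T \<nu>)) j, h T' (\<nu> @ [k])) \<in> omega1))"

lemma eventually_ranks_witnessed:
  assumes "T' \<in> U \<alpha> n T"
  shows "\<forall>\<^sub>F n' in sequentially. ranks_witnessed T n T' n'"
proof -
  have T': "T' \<in> Trw" "T' \<inter> box n = T \<inter> box n" "\<And>\<nu>. \<nu> \<in> T \<inter> box n \<Longrightarrow> h T' \<nu> = h T \<nu>"
    using assms unfolding U_def A_def by auto
  have witnessed: "\<forall>\<^sub>F n' in sequentially. underS omega1 (h T \<nu>) \<noteq> {} \<longrightarrow>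
      (\<exists>k. \<nu> @ [k] \<in> T' \<inter> box n' \<and>
        (from_nat_into (underS omega1 (h T \<nu>)) j, h T' (\<nu> @ [k])) \<in> omega1)"
    if \<nu>: "\<nu> \<in> T \<inter> box n" for \<nu> j
  proof (cases "underS omega1 (h T \<nu>) = {}")
    case False
    have "ord_less (from_nat_into (underS omega1 (h T \<nu>)) j) (h T' \<nu>)"
      using from_nat_into[OF False] T'(3)[OF \<nu>] unfolding ord_less_iff_underS by simp
    then obtain k where k: "\<nu> @ [k] \<in> T'"
      "(from_nat_into (underS omega1 (h T \<nu>)) j, h T' (\<nu> @ [k])) \<in> omega1"
      using exists_child_rank_ge[OF T'(1)] \<nu> T'(2) by blast
    show ?thesis
      using eventually_in_box[of "\<nu> @ [k]"] by (rule eventually_mono) (use k in blast)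
  qed simp
  have "\<forall>\<^sub>F n' in sequentially. \<forall>\<nu>\<in>T \<inter> box n. \<forall>j\<in>{..n}.
      underS omega1 (h T \<nu>) \<noteq> {} \<longrightarrow> (\<exists>k. \<nu> @ [k] \<in> T' \<inter> box n' \<and>
        (from_nat_into (underS omega1 (h T \<nu>)) j, h T' (\<nu> @ [k])) \<in> omega1)"
    using witnessed by (intro eventually_ball_finite ballI) (simp_all add: finite_box)
  then show ?thesis
    unfolding ranks_witnessed_def by (rule eventually_mono) auto
qed

lemma dense_open_refinement:
  assumes T: "T \<in> A \<alpha>" and G: "openin (tau \<alpha>) G" "tau \<alpha> closure_of G = topspace (tau \<alpha>)"
  shows "\<exists>T' n'. T' \<in> A \<alpha> \<and> n < n' \<and> U \<alpha> n' T' \<subseteq> U \<alpha> n T \<inter> G \<and> ranks_witnessed T n T' n'"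
proof -
  have "T \<in> tau \<alpha> closure_of G"
    using G(2) T by (simp add: topspace_tau)
  then obtain T' where T': "T' \<in> U \<alpha> n T" "T' \<in> G"
    using openin_tau_U[OF T, of n] U_self[OF T, of n] unfolding in_closure_of by blast
  then obtain m where m: "U \<alpha> m T' \<subseteq> U \<alpha> n T \<inter> G"
    using openin_Int[OF openin_tau_U[OF T] G(1)] unfolding openin_tau_iff by blast
  have "\<forall>\<^sub>F n' in sequentially. m \<le> n' \<and> n < n' \<and> ranks_witnessed T n T' n'"
    using eventually_ranks_witnessed[OF T'(1)] eventually_ge_at_top eventually_gt_at_top
    by (intro eventually_conj) auto
  then obtain n' where "m \<le> n'" "n < n'" "ranks_witnessed T n T' n'"
    unfolding eventually_sequentially by auto
  moreover have "T' \<in> A \<alpha>"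
    using T'(1) U_subset_A by blast
  moreover have "U \<alpha> n' T' \<subseteq> U \<alpha> n T \<inter> G"
    using U_antimono[OF \<open>m \<le> n'\<close>] m by (rule subset_trans)
  ultimately show ?thesis
    by blast
qed

locale fusion_sequence =
  fixes \<alpha> :: "nat set" and T :: "nat \<Rightarrow> nat list set" and n :: "nat \<Rightarrow> nat"
  assumes in_A: "T i \<in> A \<alpha>"
    and strict_mono_n: "strict_mono n"
    and nested: "T (Suc i) \<in> U \<alpha> (n i) (T i)"
    and witnessed: "ranks_witnessed (T i) (n i) (T (Suc i)) (n (Suc i))"
begin

lemma U_nested: "i \<le> j \<Longrightarrow> U \<alpha> (n j) (T j) \<subseteq> U \<alpha> (n i) (T i)"
proof (induction j rule: dec_induct)
  case (step j)
  have "U \<alpha> (n (Suc j)) (T (Suc j)) \<subseteq> U \<alpha> (n j) (T (Suc j))"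
    using strict_mono_n by (simp add: U_antimono strict_mono_less_eq)
  also have "\<dots> = U \<alpha> (n j) (T j)"
    using nested by (rule U_recenter)
  finally show ?case
    using step.IH by blast
qed simp

lemma agree:
  assumes "i \<le> j"
  shows "T j \<inter> box (n i) = T i \<inter> box (n i)" and "\<nu> \<in> T i \<inter> box (n i) \<Longrightarrow> h (T j) \<nu> = h (T i) \<nu>"
  using U_nested[OF assms] U_self[OF in_A, of j "n j"] unfolding U_def by blast+

definition limit :: "nat list set" where
  "limit = (\<Union>i. T i \<inter> box (n i))"

lemma limit_box: "limit \<inter> box (n i) = T i \<inter> box (n i)"
proof
  show "limit \<inter> box (n i) \<subseteq> T i \<inter> box (n i)"
  proof
    fix \<nu> assume "\<nu> \<in> limit \<inter> box (n i)"
    then obtain j where j: "\<nu> \<in> T j \<inter> box (n j)" "\<nu> \<in> box (n i)"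
      unfolding limit_def by blast
    show "\<nu> \<in> T i \<inter> box (n i)"
    proof (cases "i \<le> j")
      case True
      then show ?thesis using agree(1)[OF True] j by blast
    next
      case False
      then show ?thesis using agree(1)[of j i] j by auto
    qed
  qed
qed (auto simp: limit_def)

lemma eventually_in_limit_box:
  assumes "\<nu> \<in> limit"
  shows "\<forall>\<^sub>F i in sequentially. \<nu> \<in> T i \<inter> box (n i)"
proof -
  obtain i where "\<nu> \<in> box (n i)"
    using assms unfolding limit_def by blast
  then have "\<nu> \<in> limit \<inter> box (n j)" if "i \<le> j" for j
    using assms box_mono[of "n i" "n j"] strict_mono_n that by (auto simp: strict_mono_less_eq)
  then show ?thesis
    unfolding eventually_sequentially limit_box by blast
qed

definition limit_rank :: "nat list \<Rightarrow> nat set" where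
  "limit_rank \<nu> = h (T (LEAST i. \<nu> \<in> T i \<inter> box (n i))) \<nu>"

lemma limit_rank_eq:
  assumes "\<nu> \<in> T i \<inter> box (n i)"
  shows "limit_rank \<nu> = h (T i) \<nu>"
proof -
  let ?i0 = "LEAST i. \<nu> \<in> T i \<inter> box (n i)"
  have "?i0 \<le> i" and "\<nu> \<in> T ?i0 \<inter> box (n ?i0)"
    using assms by (rule Least_le, rule LeastI)
  then show ?thesis
    unfolding limit_rank_def by (simp add: agree(2))
qed

lemma limit_Tr: "limit \<in> Tr"
  unfolding Tr_def
proof (intro CollectI allI impI)
  fix s t assume "s @ t \<in> limit"
  then obtain i where i: "s @ t \<in> T i" "s @ t \<in> box (n i)"
    unfolding limit_def by blast
  have "s \<in> T i"
    using Tr_prefix[OF _ i(1)] in_A A_subset_Tr by blast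
  moreover have "s \<in> box (n i)"
    using i(2) unfolding box_def by auto
  ultimately show "s \<in> limit"
    unfolding limit_def by blast
qed

lemma limit_child_rank_less:
  assumes "\<nu> \<in> limit" "\<nu> @ [k] \<in> limit"
  shows "ord_less (limit_rank (\<nu> @ [k])) (limit_rank \<nu>)"
proof -
  have "\<forall>\<^sub>F i in sequentially. \<nu> \<in> T i \<inter> box (n i) \<and> \<nu> @ [k] \<in> T i \<inter> box (n i)"
    using assms by (intro eventually_conj eventually_in_limit_box)
  then obtain i where i: "\<nu> \<in> T i \<inter> box (n i)" "\<nu> @ [k] \<in> T i \<inter> box (n i)"
    unfolding eventually_sequentially by blast
  have "ord_less (h (T i) (\<nu> @ [k])) (h (T i) \<nu>)"
    using is_rank_at_h[of "T i" \<nu>] in_A i unfolding A_def is_rank_at_def by blast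
  then show ?thesis
    using limit_rank_eq i by simp
qed

lemma limit_child_rank_ge:
  assumes "\<nu> \<in> limit" and x: "ord_less x (limit_rank \<nu>)"
  shows "\<exists>k. \<nu> @ [k] \<in> limit \<and> (x, limit_rank (\<nu> @ [k])) \<in> omega1"
proof -
  obtain i0 where i0: "\<And>i. i0 \<le> i \<Longrightarrow> \<nu> \<in> T i \<inter> box (n i)"
    using eventually_in_limit_box[OF assms(1)] unfolding eventually_sequentially by blast
  have "x \<in> underS omega1 (limit_rank \<nu>)"
    using x unfolding ord_less_iff_underS .
  then obtain j where j: "x = from_nat_into (underS omega1 (limit_rank \<nu>)) j"
    using from_nat_into_surj[OF countable_underS_omega1] by metis
  define i where "i = max i0 j"
  have \<nu>: "\<nu> \<in> T i \<inter> box (n i)"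
    using i0 by (simp add: i_def)
  have "j \<le> n i"
    using strict_mono_imp_increasing[OF strict_mono_n, of i] by (simp add: i_def)
  moreover have "underS omega1 (h (T i) \<nu>) \<noteq> {}"
    using x limit_rank_eq[OF \<nu>] unfolding ord_less_iff_underS by auto
  ultimately have "\<exists>k. \<nu> @ [k] \<in> T (Suc i) \<inter> box (n (Suc i)) \<and>
      (from_nat_into (underS omega1 (h (T i) \<nu>)) j, h (T (Suc i)) (\<nu> @ [k])) \<in> omega1"
    using witnessed[of i] \<nu> unfolding ranks_witnessed_def by blast
  then obtain k where k: "\<nu> @ [k] \<in> T (Suc i) \<inter> box (n (Suc i))"
      "(x, h (T (Suc i)) (\<nu> @ [k])) \<in> omega1"
    using j limit_rank_eq[OF \<nu>] by auto
  then show ?thesis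
    using limit_rank_eq[OF k(1)] unfolding limit_def by auto
qed

lemma is_rank_at_limit:
  assumes "\<nu> \<in> limit"
  shows "is_rank_at limit limit_rank \<nu>"
proof -
  obtain i where i: "\<nu> \<in> T i \<inter> box (n i)"
    using assms unfolding limit_def by blast
  have "limit_rank \<nu> \<in> Field omega1"
    using is_rank_at_h[of "T i" \<nu>] in_A i limit_rank_eq[OF i]
    unfolding A_def is_rank_at_def by auto
  moreover have "(limit_rank \<nu>, x) \<in> omega1"
    if "x \<in> Field omega1" "\<forall>k. \<nu> @ [k] \<in> limit \<longrightarrow> ord_less (limit_rank (\<nu> @ [k])) x" for x
    using limit_child_rank_ge[OF assms] ord_le_or_less[OF calculation that(1)] that(2)
      ord_le_imp_not_less by blast
  ultimately show ?thesis
    using limit_child_rank_less[OF assms] unfolding is_rank_at_def by blast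
qed

lemma limit_in_U: "limit \<in> U \<alpha> (n i) (T i)"
proof -
  note limit_rank = h_eqI[OF limit_Tr is_rank_at_limit]
  show ?thesis
  proof (rule in_U_if_agrees[OF in_A limit_rank(1) limit_box])
    fix \<nu> assume "\<nu> \<in> T i \<inter> box (n i)"
    then show "h limit \<nu> = h (T i) \<nu>"
      using limit_rank(2) limit_rank_eq limit_box by blast
  qed
qed

end

lemma Baire_spaceI_sequence:
  assumes "\<And>G :: nat \<Rightarrow> 'a set. (\<And>i. openin X (G i)) \<Longrightarrow> (\<And>i. X closure_of G i = topspace X)
      \<Longrightarrow> X closure_of (\<Inter>i. G i) = topspace X"
  shows "Baire_space X"
  unfolding Baire_space_def
proof (intro allI impI)
  fix \<G> assume \<G>: "countable \<G> \<and> (\<forall>G\<in>\<G>. openin X G \<and> X closure_of G = topspace X)"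
  define \<G>' where "\<G>' = insert (topspace X) \<G>"
  have "openin X G \<and> X closure_of G = topspace X" if "G \<in> \<G>'" for G
    using that \<G> by (auto simp: \<G>'_def)
  moreover have "from_nat_into \<G>' i \<in> \<G>'" for i
    by (rule from_nat_into) (simp add: \<G>'_def)
  ultimately have "openin X (from_nat_into \<G>' i)"
    and "X closure_of (from_nat_into \<G>' i) = topspace X" for i
    by blast+
  then have "X closure_of (\<Inter>i. from_nat_into \<G>' i) = topspace X"
    by (rule assms)
  moreover have "(\<Inter>i. from_nat_into \<G>' i) \<subseteq> \<Inter>\<G>"
    using \<G> range_from_nat_into[of \<G>'] by (auto simp: \<G>'_def)
  ultimately show "X closure_of \<Inter>\<G> = topspace X"
    using closure_of_mono closure_of_subset_topspace by (metis subset_antisym)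
qed

lemma tau_dense_Inter:
  fixes G :: "nat \<Rightarrow> nat list set set"
  assumes G: "\<And>i. openin (tau \<alpha>) (G i)" "\<And>i. tau \<alpha> closure_of (G i) = topspace (tau \<alpha>)"
  shows "tau \<alpha> closure_of (\<Inter>i. G i) = topspace (tau \<alpha>)"
proof (rule subset_antisym[OF closure_of_subset_topspace subsetI])
  fix T0 assume T0: "T0 \<in> topspace (tau \<alpha>)"
  have "\<exists>S. S \<in> (\<Inter>i. G i) \<and> S \<in> W" if W: "T0 \<in> W" "openin (tau \<alpha>) W" for W
  proof -
    obtain n0 where n0: "U \<alpha> n0 T0 \<subseteq> W"
      using W unfolding openin_tau_iff by blast
    define P where "P i x \<longleftrightarrow> fst x \<in> A \<alpha> \<and> U \<alpha> (snd x) (fst x) \<subseteq> W"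
      for i :: nat and x :: "nat list set \<times> nat"
    define Q where "Q i x y \<longleftrightarrow> snd x < snd y \<and> U \<alpha> (snd y) (fst y) \<subseteq> U \<alpha> (snd x) (fst x) \<inter> G i
        \<and> ranks_witnessed (fst x) (snd x) (fst y) (snd y)"
      for i x y
    have "\<exists>f. \<forall>i. P i (f i) \<and> Q i (f i) (f (Suc i))"
    proof (rule dependent_nat_choice)
      show "\<exists>x. P 0 x"
        using T0 n0 unfolding P_def topspace_tau by auto
      show "\<exists>y. P (Suc i) y \<and> Q i x y" if "P i x" for x i
      proof -
        have "fst x \<in> A \<alpha>"
          using that unfolding P_def by blast
        then obtain T' n' where "T' \<in> A \<alpha>" "snd x < n'" "U \<alpha> n' T' \<subseteq> U \<alpha> (snd x) (fst x) \<inter> G i"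
            "ranks_witnessed (fst x) (snd x) T' n'"
          using dense_open_refinement[OF _ G(1) G(2), of "fst x" "snd x"] by blast
        then have "P (Suc i) (T', n') \<and> Q i x (T', n')"
          using that unfolding P_def Q_def by auto
        then show ?thesis ..
      qed
    qed
    then obtain f where f: "\<And>i. P i (f i)" "\<And>i. Q i (f i) (f (Suc i))"
      by blast
    interpret fusion_sequence \<alpha> "fst \<circ> f" "snd \<circ> f"
    proof
      show "(fst \<circ> f) i \<in> A \<alpha>" for i
        using f(1) unfolding P_def by simp
      show "strict_mono (snd \<circ> f)"
        using f(2) unfolding strict_mono_Suc_iff Q_def by simp
      show "(fst \<circ> f) (Suc i) \<in> U \<alpha> ((snd \<circ> f) i) ((fst \<circ> f) i)" for i
        using f U_self unfolding P_def Q_def by fastforce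
      show "ranks_witnessed ((fst \<circ> f) i) ((snd \<circ> f) i) ((fst \<circ> f) (Suc i)) ((snd \<circ> f) (Suc i))"
        for i
        using f(2) unfolding Q_def by simp
    qed
    have "limit \<in> G i" for i
      using limit_in_U[of "Suc i"] f(2)[of i] unfolding Q_def by auto
    moreover have "limit \<in> W"
      using limit_in_U[of 0] f(1)[of 0] unfolding P_def by auto
    ultimately show ?thesis
      by blast
  qed
  then show "T0 \<in> tau \<alpha> closure_of (\<Inter>i. G i)"
    using T0 unfolding in_closure_of by blast
qed

lemma Baire_space_tau: "Baire_space (tau \<alpha>)"
  by (rule Baire_spaceI_sequence) (rule tau_dense_Inter)

theorem lemma5p2:
  assumes "\<alpha> \<in> Field omega1"
  shows "Baire_space (tau \<alpha>)
       \<and> (ord_less (wo_rel.minim omega1 (Field omega1)) \<alpha> \<longrightarrow>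
            (\<forall>T\<in>topspace (tau \<alpha>). \<not> openin (tau \<alpha>) {T}))
       \<and> (\<forall>B. B \<subseteq> A \<alpha> \<and> B \<in> borel_sets Tr_top \<longrightarrow> B \<in> borel_sets (tau \<alpha>))"
  using Baire_space_tau tau_no_isolated_points borel_sets_tau by blast

end
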